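(* Let $n,d,r\in\mathbb N$ with $p=d\ge2$, let $\lambda_i\ge0$ and $\boldsymbol x_i\in\mathbb R^n_+$ with $\|\boldsymbol x_i\|_p=1$ for $i=1,\dots,r$. Then $$\Big\|\sum_{i=1}^r\lambda_i\,\boldsymbol x_i^{\otimes d}\Big\|_{p_*}=\sum_{i=1}^r\lambda_i.$$
   Context: $\boldsymbol x^{\otimes d}=\boldsymbol x\otimes\dots\otimes\boldsymbol x$ ($d$ factors). Tensor nuclear $p$-norm: $\|\mathcal T\|_{p_*}=\min\{\sum_{i}|\mu_i|:\mathcal T=\sum_{i=1}^s\mu_i\boldsymbol y_i^1\otimes\dots\otimes\boldsymbol y_i^d,\ \|\boldsymbol y_i^k\|_p=1,\ s\in\mathbb N\}$. *)

theory Defs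
  imports Complex_Main
begin

text \<open>Vectors in R^n are functions nat => real; only components 0..<n matter.
  Order-d tensors over R^n are functions on index lists of length d with entries < n.\<close>

definition pnorm :: "real \<Rightarrow> nat \<Rightarrow> (nat \<Rightarrow> real) \<Rightarrow> real" where
  "pnorm p n x = (\<Sum>j<n. \<bar>x j\<bar> powr p) powr (1 / p)"

definition tensor_indices :: "nat \<Rightarrow> nat \<Rightarrow> nat list set" where
  "tensor_indices n d = {idx. length idx = d \<and> set idx \<subseteq> {..<n}}"

definition outer :: "nat \<Rightarrow> (nat \<Rightarrow> nat \<Rightarrow> real) \<Rightarrow> nat list \<Rightarrow> real" where
  "outer d ys = (\<lambda>idx. \<Prod>k<d. ys k (idx ! k))"

definition tpow :: "nat \<Rightarrow> (nat \<Rightarrow> real) \<Rightarrow> nat list \<Rightarrow> real" where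
  "tpow d x = outer d (\<lambda>_. x)"

text \<open>Tensor nuclear p-norm: min (= Inf, the minimum being attained) of sum |mu_i|
  over all decompositions T = sum_{i<s} mu_i y_i^1 (x) ... (x) y_i^d with ||y_i^k||_p = 1.\<close>
definition nuclear_pnorm :: "real \<Rightarrow> nat \<Rightarrow> nat \<Rightarrow> (nat list \<Rightarrow> real) \<Rightarrow> real" where
  "nuclear_pnorm p n d T = Inf {\<Sum>i<s. \<bar>\<mu> i\<bar> | (s::nat) (\<mu>::nat \<Rightarrow> real) (y::nat \<Rightarrow> nat \<Rightarrow> nat \<Rightarrow> real).
      (\<forall>i<s. \<forall>k<d. pnorm p n (y i k) = 1) \<and>
      (\<forall>idx\<in>tensor_indices n d. T idx = (\<Sum>i<s. \<mu> i * outer d (y i) idx))}"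

end

theory Submission
  imports Defs "HOL-Analysis.Analysis"
begin

text \<open>The diagonal functional \<open>\<phi>(T) = \<Sum>\<^sub>j T(j,\<dots>,j)\<close> certifies that the obvious
  decomposition is optimal. For unit \<open>d\<close>-norm vectors \<open>y\<^sup>1, \<dots>, y\<^sup>d\<close>, AM-GM gives
  \<open>\<bar>\<phi>(y\<^sup>1 \<otimes> \<dots> \<otimes> y\<^sup>d)\<bar> \<le> \<Sum>\<^sub>j \<Sum>\<^sub>k \<bar>y\<^sup>k\<^sub>j\<bar>\<^sup>d / d = 1\<close>, so \<open>\<phi>(T)\<close> is a lower bound for the cost
  \<open>\<Sum> \<bar>\<mu>\<^sub>i\<bar>\<close> of every decomposition of \<open>T\<close>. For nonnegative unit vectors \<open>x\<^sub>i\<close>,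
  \<open>\<phi>(\<Sum> \<lambda>\<^sub>i x\<^sub>i\<^sup>\<otimes>\<^sup>d) = \<Sum> \<lambda>\<^sub>i \<parallel>x\<^sub>i\<parallel>\<^sub>d\<^sup>d = \<Sum> \<lambda>\<^sub>i\<close>, which is the cost of that decomposition.\<close>

lemma power_powr_inverse:
  fixes t :: real
  assumes "t \<ge> 0" "d > 0"
  shows "(t ^ d) powr (1 / real d) = t"
  using assms by (simp add: powr_realpow'[symmetric] powr_powr)

lemma pnorm_power:
  assumes "d > 0"
  shows "pnorm (real d) n y ^ d = (\<Sum>j<n. \<bar>y j\<bar> ^ d)"
proof -
  define S where "S = (\<Sum>j<n. \<bar>y j\<bar> ^ d)"
  have "S \<ge> 0" unfolding S_def by (simp add: sum_nonneg)
  have "pnorm (real d) n y ^ d = (S powr (1 / real d)) ^ d"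
    unfolding pnorm_def S_def using assms by (simp add: powr_realpow')
  also have "\<dots> = (S powr (1 / real d)) powr real d"
    using assms by (simp add: powr_realpow')
  also have "\<dots> = S"
    using \<open>S \<ge> 0\<close> assms by (simp add: powr_powr)
  finally show ?thesis unfolding S_def .
qed

lemma prod_le_mean_of_powers:
  fixes a :: "nat \<Rightarrow> real"
  assumes "d > 0" "\<And>k. k < d \<Longrightarrow> a k \<ge> 0"
  shows "(\<Prod>k<d. a k) \<le> (\<Sum>k<d. a k ^ d) / real d"
proof -
  have "(\<Prod>k<d. a k) = ((\<Prod>k<d. a k) ^ d) powr (1 / real d)"
    by (rule power_powr_inverse[symmetric]) (use assms in \<open>auto intro: prod_nonneg\<close>)
  also have "\<dots> = (\<Prod>k<d. a k ^ d) powr (1 / card {..<d})"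
    by (simp add: prod_power_distrib)
  also have "\<dots> \<le> (\<Sum>k<d. a k ^ d / card {..<d})"
    using assms by (intro arith_geom_mean) auto
  also have "\<dots> = (\<Sum>k<d. a k ^ d) / real d"
    by (simp add: sum_divide_distrib)
  finally show ?thesis .
qed

definition diagonal_sum :: "nat \<Rightarrow> nat \<Rightarrow> (nat list \<Rightarrow> real) \<Rightarrow> real" where
  "diagonal_sum n d T = (\<Sum>j<n. T (replicate d j))"

lemma replicate_in_tensor_indices: "j < n \<Longrightarrow> replicate d j \<in> tensor_indices n d"
  unfolding tensor_indices_def by auto

lemma diagonal_sum_cong:
  assumes "\<forall>idx\<in>tensor_indices n d. S idx = T idx"
  shows "diagonal_sum n d S = diagonal_sum n d T"
  unfolding diagonal_sum_def using assms replicate_in_tensor_indices by simp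

lemma diagonal_sum_linear_combination:
  fixes s :: nat
  shows "diagonal_sum n d (\<lambda>idx. \<Sum>i<s. \<mu> i * T i idx) = (\<Sum>i<s. \<mu> i * diagonal_sum n d (T i))"
  unfolding diagonal_sum_def by (simp add: sum_distrib_left sum.swap[of _ "{..<n}"])

lemma outer_replicate: "outer d y (replicate d j) = (\<Prod>k<d. y k j)"
  unfolding outer_def by (intro prod.cong) auto

lemma diagonal_sum_tpow:
  assumes "d > 0" "\<forall>j<n. x j \<ge> 0"
  shows "diagonal_sum n d (tpow d x) = pnorm (real d) n x ^ d"
  using assms by (simp add: diagonal_sum_def tpow_def outer_replicate pnorm_power)

lemma abs_diagonal_sum_outer_le:
  assumes "d > 0" "\<forall>k<d. pnorm (real d) n (y k) = 1"
  shows "\<bar>diagonal_sum n d (outer d y)\<bar> \<le> 1"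
proof -
  have "\<bar>diagonal_sum n d (outer d y)\<bar> \<le> (\<Sum>j<n. \<Prod>k<d. \<bar>y k j\<bar>)"
    unfolding diagonal_sum_def outer_replicate abs_prod[symmetric] by (rule sum_abs)
  also have "\<dots> \<le> (\<Sum>j<n. (\<Sum>k<d. \<bar>y k j\<bar> ^ d) / real d)"
    using assms by (intro sum_mono prod_le_mean_of_powers) auto
  also have "\<dots> = (\<Sum>k<d. \<Sum>j<n. \<bar>y k j\<bar> ^ d) / real d"
    by (simp add: sum_divide_distrib[symmetric] sum.swap[of _ "{..<n}"])
  also have "\<dots> = (\<Sum>k<d. pnorm (real d) n (y k) ^ d) / real d"
    using assms(1) by (simp add: pnorm_power)
  also have "\<dots> = 1"
    using assms by simp
  finally show ?thesis .
qed

lemma diagonal_sum_le_decomposition_cost: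
  fixes s :: nat
  assumes "d > 0"
    and "\<forall>i<s. \<forall>k<d. pnorm (real d) n (y i k) = 1"
    and "\<forall>idx\<in>tensor_indices n d. T idx = (\<Sum>i<s. \<mu> i * outer d (y i) idx)"
  shows "diagonal_sum n d T \<le> (\<Sum>i<s. \<bar>\<mu> i\<bar>)"
proof -
  have "diagonal_sum n d T = (\<Sum>i<s. \<mu> i * diagonal_sum n d (outer d (y i)))"
    using diagonal_sum_cong[OF assms(3)] by (simp add: diagonal_sum_linear_combination)
  also have "\<dots> \<le> (\<Sum>i<s. \<bar>\<mu> i\<bar> * \<bar>diagonal_sum n d (outer d (y i))\<bar>)"
    by (intro sum_mono) (metis abs_ge_self abs_mult)
  also have "\<dots> \<le> (\<Sum>i<s. \<bar>\<mu> i\<bar>)"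
    using assms(1,2) abs_diagonal_sum_outer_le
    by (intro sum_mono) (simp add: mult_left_le)
  finally show ?thesis .
qed

lemma nuclear_pnorm_eq_minimal_decomposition:
  fixes s :: nat
  assumes "\<forall>i<s. \<forall>k<d. pnorm p n (y i k) = 1"
    and "\<forall>idx\<in>tensor_indices n d. T idx = (\<Sum>i<s. \<mu> i * outer d (y i) idx)"
    and "\<And>(s' :: nat) \<mu>' y'. \<forall>i<s'. \<forall>k<d. pnorm p n (y' i k) = 1 \<Longrightarrow>
      \<forall>idx\<in>tensor_indices n d. T idx = (\<Sum>i<s'. \<mu>' i * outer d (y' i) idx) \<Longrightarrow>
      (\<Sum>i<s. \<bar>\<mu> i\<bar>) \<le> (\<Sum>i<s'. \<bar>\<mu>' i\<bar>)"
  shows "nuclear_pnorm p n d T = (\<Sum>i<s. \<bar>\<mu> i\<bar>)"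
  unfolding nuclear_pnorm_def by (rule cInf_eq_minimum) (use assms in blast)+

theorem corollary5p14:
  fixes n d r :: nat and lam :: "nat \<Rightarrow> real" and x :: "nat \<Rightarrow> nat \<Rightarrow> real"
  assumes "d \<ge> 2"
    and "\<forall>i<r. lam i \<ge> 0"
    and "\<forall>i<r. \<forall>j<n. x i j \<ge> 0"
    and "\<forall>i<r. pnorm (real d) n (x i) = 1"
  shows "nuclear_pnorm (real d) n d (\<lambda>idx. \<Sum>i<r. lam i * tpow d (x i) idx) = (\<Sum>i<r. lam i)"
proof -
  define T where "T = (\<lambda>idx. \<Sum>i<r. lam i * tpow d (x i) idx)"
  have "d > 0" using assms(1) by simp
  have cost: "(\<Sum>i<r. lam i) = (\<Sum>i<r. \<bar>lam i\<bar>)"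
    using assms(2) by simp
  have diagonal: "diagonal_sum n d T = (\<Sum>i<r. lam i)"
    using \<open>d > 0\<close> assms(3,4)
    by (simp add: T_def diagonal_sum_linear_combination diagonal_sum_tpow)
  have "nuclear_pnorm (real d) n d T = (\<Sum>i<r. \<bar>lam i\<bar>)"
  proof (rule nuclear_pnorm_eq_minimal_decomposition[where y = "\<lambda>i _. x i"])
    show "\<forall>idx\<in>tensor_indices n d. T idx = (\<Sum>i<r. lam i * outer d (\<lambda>_. x i) idx)"
      by (simp add: T_def tpow_def)
  next
    fix s' :: nat and \<mu>' y'
    assume "\<forall>i<s'. \<forall>k<d. pnorm (real d) n (y' i k) = 1"
      and "\<forall>idx\<in>tensor_indices n d. T idx = (\<Sum>i<s'. \<mu>' i * outer d (y' i) idx)"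
    from diagonal_sum_le_decomposition_cost[OF \<open>d > 0\<close> this]
    show "(\<Sum>i<r. \<bar>lam i\<bar>) \<le> (\<Sum>i<s'. \<bar>\<mu>' i\<bar>)"
      unfolding diagonal cost .
  qed (use assms(4) in simp)
  then show ?thesis unfolding T_def cost .
qed

end
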